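(* Let $Z$ be the precubical set with exactly one cube $z^n$ in each dimension $n\ge0$, and let $J(S^1)=J(S^1,1)$ be the James construction on the circle. The map $f:|Z|\to J(S^1)$ given by $f([z^n;x_1,\dots,x_n])=(e^{2\pi i x_1},\dots,e^{2\pi i x_n})$ is a well-defined homeomorphism.
   Context: A precubical set $K$ has sets $K[n]$ of $n$-cubes and face maps $d^\varepsilon_i:K[n]\to K[n-1]$ ($1\le i\le n$, $\varepsilon\in\{0,1\}$); for $Z$ necessarily $d^\varepsilon_i z^n=z^{n-1}$. The geometric realization $|K|=\coprod_n K[n]\times[0,1]^n/\sim$, with $(d^\varepsilon_i c,\mathbf x)\sim(c,\delta^\varepsilon_i\mathbf x)$ where $\delta^\varepsilon_i(x_1,\dots,x_{n-1})=(x_1,\dots,x_{i-1},\varepsilon,x_i,\dots,x_{n-1})$, carries the quotient topology; $[c;\mathbf x]$ is the class. For a pointed space $(X,x_0)$, $J_n(X)$ is the quotient of $X^n$ by $(x_1,\dots,x_i,x_0,x_{i+1},\dots,x_{n-1})\sim(x_1,\dots,x_0,x_i,x_{i+1},\dots,x_{n-1})$ (moving the base point), with inclusions $J_n(X)\subseteq J_{n+1}(X)$ appending $x_0$ in the last position, and $J(X)=\mathrm{colim}_n J_n(X)$ (the free topological monoid on $(X,x_0)$); the class of $(y_1,\dots,y_n)$ is written $(y_1,\dots,y_n)$. *)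

theory Defs
  imports "HOL-Analysis.Analysis"
begin

text \<open>Equivalence relation on A generated by a relation r (assumed to lie in A x A).\<close>
definition gen_equiv :: "'a set \<Rightarrow> ('a \<times> 'a) set \<Rightarrow> ('a \<times> 'a) set" where
  "gen_equiv A r = (r \<union> r\<inverse>)\<^sup>* \<inter> (A \<times> A)"

definition quot_topology :: "'a topology \<Rightarrow> ('a \<times> 'a) set \<Rightarrow> 'a set topology" where
  "quot_topology X R =
     topology (\<lambda>U. U \<subseteq> topspace X // R \<and> openin X (\<Union>U))"

definition cls :: "('a \<times> 'a) set \<Rightarrow> 'a \<Rightarrow> 'a set" where
  "cls R a = R `` {a}"

text \<open>Points of [0,1]^n are extensional functions on {..<n}; coordinate x_k
  (1-based, as in the paper) is the value at k-1.\<close>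
definition cube_top :: "nat \<Rightarrow> (nat \<Rightarrow> real) topology" where
  "cube_top n = product_topology (\<lambda>_. top_of_set {0..1::real}) {..<n}"

text \<open>Coface map delta_i^e : [0,1]^(n-1) \<rightarrow> [0,1]^n, inserting e at position i
  (1-based, 1 \<le> i \<le> n).\<close>
definition coface :: "nat \<Rightarrow> nat \<Rightarrow> real \<Rightarrow> (nat \<Rightarrow> real) \<Rightarrow> (nat \<Rightarrow> real)" where
  "coface n i e x = (\<lambda>j\<in>{..<n}. if j < i - 1 then x j else if j = i - 1 then e else x (j - 1))"

text \<open>A precubical set is given by its sets of n-cubes K n and face maps
  d n i e : K n \<rightarrow> K (n-1) (1 \<le> i \<le> n, e \<in> {0,1} encoded as bool, True = 1).\<close>


definition cubes_sum :: "(nat \<Rightarrow> 'c set) \<Rightarrow> (nat \<times> ('c \<times> (nat \<Rightarrow> real))) topology" where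
  "cubes_sum K = sum_topology (\<lambda>n. prod_topology (discrete_topology (K n)) (cube_top n)) UNIV"

definition realization_rel ::
  "(nat \<Rightarrow> 'c set) \<Rightarrow> (nat \<Rightarrow> nat \<Rightarrow> bool \<Rightarrow> 'c \<Rightarrow> 'c)
     \<Rightarrow> ((nat \<times> ('c \<times> (nat \<Rightarrow> real))) \<times> (nat \<times> ('c \<times> (nat \<Rightarrow> real)))) set" where
  "realization_rel K d =
     {((m, (d (Suc m) i e c, x)), (Suc m, (c, coface (Suc m) i (if e then 1 else 0) x))) | m i e c x.
        c \<in> K (Suc m) \<and> 1 \<le> i \<and> i \<le> Suc m \<and> x \<in> topspace (cube_top m)}"

definition realization ::
  "(nat \<Rightarrow> 'c set) \<Rightarrow> (nat \<Rightarrow> nat \<Rightarrow> bool \<Rightarrow> 'c \<Rightarrow> 'c)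
     \<Rightarrow> (nat \<times> ('c \<times> (nat \<Rightarrow> real))) set topology" where
  "realization K d = quot_topology (cubes_sum K) (gen_equiv (topspace (cubes_sum K)) (realization_rel K d))"

definition Z_cubes :: "nat \<Rightarrow> unit set" where "Z_cubes n = {()}"
definition Z_face :: "nat \<Rightarrow> nat \<Rightarrow> bool \<Rightarrow> unit \<Rightarrow> unit" where "Z_face n i e c = ()"

definition pow_top :: "'a topology \<Rightarrow> nat \<Rightarrow> (nat \<Rightarrow> 'a) topology" where
  "pow_top X n = product_topology (\<lambda>_. X) {..<n}"

text \<open>Moving the base point one slot to the left:
  (..., y_i, x0, ...) ~ (..., x0, y_i, ...).\<close>
definition james_rel :: "'a topology \<Rightarrow> 'a \<Rightarrow> nat \<Rightarrow> ((nat \<Rightarrow> 'a) \<times> (nat \<Rightarrow> 'a)) set" where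
  "james_rel X x0 n =
     {(y, y(k := x0, Suc k := y k)) | y k. y \<in> topspace (pow_top X n) \<and> Suc k < n \<and> y (Suc k) = x0}"

definition J_n :: "'a topology \<Rightarrow> 'a \<Rightarrow> nat \<Rightarrow> (nat \<Rightarrow> 'a) set topology" where
  "J_n X x0 n = quot_topology (pow_top X n) (gen_equiv (topspace (pow_top X n)) (james_rel X x0 n))"

definition J_incl :: "'a topology \<Rightarrow> 'a \<Rightarrow> nat \<Rightarrow> (nat \<Rightarrow> 'a) set \<Rightarrow> (nat \<Rightarrow> 'a) set" where
  "J_incl X x0 n C =
     cls (gen_equiv (topspace (pow_top X (Suc n))) (james_rel X x0 (Suc n))) ((SOME y. y \<in> C)(n := x0))"

text \<open>Colimit of the sequence J_0 \<rightarrow> J_1 \<rightarrow> ...: quotient of the disjoint sum by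
  the relation identifying a point with its image under the inclusion.\<close>
definition J_sum :: "'a topology \<Rightarrow> 'a \<Rightarrow> (nat \<times> (nat \<Rightarrow> 'a) set) topology" where
  "J_sum X x0 = sum_topology (J_n X x0) UNIV"

definition J_colim_rel :: "'a topology \<Rightarrow> 'a \<Rightarrow> ((nat \<times> (nat \<Rightarrow> 'a) set) \<times> (nat \<times> (nat \<Rightarrow> 'a) set)) set" where
  "J_colim_rel X x0 = {((n, C), (Suc n, J_incl X x0 n C)) | n C. C \<in> topspace (J_n X x0 n)}"

definition James :: "'a topology \<Rightarrow> 'a \<Rightarrow> (nat \<times> (nat \<Rightarrow> 'a) set) set topology" where
  "James X x0 = quot_topology (J_sum X x0) (gen_equiv (topspace (J_sum X x0)) (J_colim_rel X x0))"

definition James_pt :: "'a topology \<Rightarrow> 'a \<Rightarrow> nat \<Rightarrow> (nat \<Rightarrow> 'a) \<Rightarrow> (nat \<times> (nat \<Rightarrow> 'a) set) set" where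
  "James_pt X x0 n y =
     cls (gen_equiv (topspace (J_sum X x0)) (J_colim_rel X x0))
       (n, cls (gen_equiv (topspace (pow_top X n)) (james_rel X x0 n)) y)"

definition circle :: "complex topology" where "circle = top_of_set (sphere 0 1)"

end

theory Submission
  imports Defs
begin

(*
  A face identification of |Z| inserts a coordinate 0 or 1 into a cube point, and
  e(t) = exp(2 pi i t) sends both to the base point 1 of the circle; inserting the base
  point is exactly what the James relations and inclusions undo, so F is well defined.
  Conversely, every point of |Z| is identified with the open cube spanned by its interior
  coordinates (those in (0,1)), while the word of non-base-point entries is an invariant
  of points of J(S^1); as e is injective on (0,1), F is injective. Finally F is a composite
  of quotient maps: on each cube it is the closed surjection [0,1]^n -> (S^1)^n from a
  compact to a Hausdorff space, followed by the quotient maps defining J_n and J.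
*)

section \<open>Quotient topologies\<close>

lemma equiv_gen_equiv: "equiv A (gen_equiv A r)"
proof -
  have "sym ((r \<union> r\<inverse>)\<^sup>*)" by (simp add: sym_Un_converse sym_rtrancl)
  then show ?thesis
    unfolding equiv_def gen_equiv_def refl_on_def sym_def trans_def
    by (auto intro: rtrancl_trans)
qed

lemma gen_equiv_refl: "a \<in> A \<Longrightarrow> (a, a) \<in> gen_equiv A r"
  by (auto simp: gen_equiv_def)

lemma gen_equiv_sym: "(a, b) \<in> gen_equiv A r \<Longrightarrow> (b, a) \<in> gen_equiv A r"
  using equiv_gen_equiv[of A r] unfolding equiv_def sym_def by blast

lemma gen_equiv_trans:
  "(a, b) \<in> gen_equiv A r \<Longrightarrow> (b, c) \<in> gen_equiv A r \<Longrightarrow> (a, c) \<in> gen_equiv A r"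
  using equiv_gen_equiv[of A r] unfolding equiv_def trans_def by blast

lemma gen_equivI: "(a, b) \<in> r \<Longrightarrow> a \<in> A \<Longrightarrow> b \<in> A \<Longrightarrow> (a, b) \<in> gen_equiv A r"
  by (auto simp: gen_equiv_def)

lemma gen_equiv_respects:
  assumes "\<And>a b. (a, b) \<in> r \<Longrightarrow> f a = f b" and "(a, b) \<in> gen_equiv A r"
  shows "f a = f b"
proof -
  have "(a, b) \<in> (r \<union> r\<inverse>)\<^sup>*" using assms(2) by (simp add: gen_equiv_def)
  then show ?thesis
    by (induction rule: rtrancl_induct) (auto dest: assms(1))
qed

lemma gen_equiv_image:
  assumes "r \<subseteq> A \<times> A" and "f ` A \<subseteq> B"
    and "\<And>a b. (a, b) \<in> r \<Longrightarrow> (f a, f b) \<in> s"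
    and "(a, b) \<in> gen_equiv A r"
  shows "(f a, f b) \<in> gen_equiv B s"
proof -
  have ab: "(a, b) \<in> (r \<union> r\<inverse>)\<^sup>*" "a \<in> A" using assms(4) by (auto simp: gen_equiv_def)
  have "(f a, f b) \<in> (s \<union> s\<inverse>)\<^sup>* \<and> b \<in> A"
    using ab
  proof (induction rule: rtrancl_induct)
    case (step y z)
    then have "(f y, f z) \<in> s \<union> s\<inverse>" "z \<in> A" using assms(1,3) by auto
    then show ?case using step by (auto intro: rtrancl_into_rtrancl)
  qed simp
  then show ?thesis using ab assms(2) by (auto simp: gen_equiv_def)
qed

lemma cls_eqI: "(a, b) \<in> gen_equiv A r \<Longrightarrow> cls (gen_equiv A r) a = cls (gen_equiv A r) b"
  unfolding cls_def by (rule equiv_class_eq[OF equiv_gen_equiv])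

lemma cls_eq_iff:
  "a \<in> A \<Longrightarrow> b \<in> A \<Longrightarrow> cls (gen_equiv A r) a = cls (gen_equiv A r) b \<longleftrightarrow> (a, b) \<in> gen_equiv A r"
  unfolding cls_def by (rule eq_equiv_class_iff[OF equiv_gen_equiv])

lemma cls_in_quotient: "a \<in> A \<Longrightarrow> cls R a \<in> A // R"
  by (simp add: cls_def quotientI)

lemma some_in_cls: "equiv A R \<Longrightarrow> a \<in> A \<Longrightarrow> (a, SOME b. b \<in> cls R a) \<in> R"
  unfolding cls_def by (metis Image_singleton_iff equiv_class_self someI)

lemma openin_quot_topology:
  assumes "equiv (topspace X) R"
  shows "openin (quot_topology X R) U \<longleftrightarrow> U \<subseteq> topspace X // R \<and> openin X (\<Union>U)"
proof -
  have "istopology (\<lambda>U. U \<subseteq> topspace X // R \<and> openin X (\<Union>U))"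
    unfolding istopology_def
  proof (rule conjI; intro allI impI)
    fix S T
    assume "S \<subseteq> topspace X // R \<and> openin X (\<Union>S)" "T \<subseteq> topspace X // R \<and> openin X (\<Union>T)"
    moreover
    from this have "\<Union>(S \<inter> T) = \<Union>S \<inter> \<Union>T"
      using quotient_disj[OF assms] by blast
    ultimately show "S \<inter> T \<subseteq> topspace X // R \<and> openin X (\<Union>(S \<inter> T))" by auto
  next
    fix \<K> assume "\<forall>K\<in>\<K>. K \<subseteq> topspace X // R \<and> openin X (\<Union>K)"
    moreover have "\<Union>(\<Union>\<K>) = \<Union>(Union ` \<K>)" by auto
    ultimately show "\<Union>\<K> \<subseteq> topspace X // R \<and> openin X (\<Union>(\<Union>\<K>))" by auto
  qed
  then show ?thesis unfolding quot_topology_def by (simp add: topology_inverse')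
qed

lemma topspace_quot_topology:
  assumes "equiv (topspace X) R"
  shows "topspace (quot_topology X R) = topspace X // R"
proof -
  have "openin (quot_topology X R) (topspace X // R)"
    using assms by (simp add: openin_quot_topology Union_quotient)
  then show ?thesis
    using openin_subset openin_quot_topology[OF assms, of "topspace (quot_topology X R)"] by blast
qed

lemma Union_subset_quotient:
  assumes R: "equiv A R" and U: "U \<subseteq> A // R"
  shows "\<Union>U = {x \<in> A. cls R x \<in> U}"
proof safe
  fix x C assume "x \<in> C" "C \<in> U"
  moreover obtain a where "a \<in> A" "C = R `` {a}" using U \<open>C \<in> U\<close> by (auto elim: quotientE)
  ultimately show "x \<in> A" "cls R x \<in> U"
    using R by (auto simp: cls_def equiv_class_eq dest: equiv_type[OF R, THEN subsetD])
next
  fix x assume "x \<in> A" "cls R x \<in> U"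
  then show "x \<in> \<Union>U" using R by (auto simp: cls_def intro: equiv_class_self)
qed

lemma quotient_map_cls:
  assumes "equiv (topspace X) R"
  shows "quotient_map X (quot_topology X R) (cls R)"
  unfolding quotient_map_def topspace_quot_topology[OF assms]
proof (intro conjI allI impI)
  show "cls R ` topspace X = topspace X // R"
    by (auto simp: cls_def quotient_def)
  fix U assume "U \<subseteq> topspace X // R"
  then show "openin X {x \<in> topspace X. cls R x \<in> U} \<longleftrightarrow> openin (quot_topology X R) U"
    by (simp add: openin_quot_topology[OF assms] Union_subset_quotient[OF assms])
qed

lemma homeomorphic_map_quot_topology:
  assumes R: "equiv (topspace X) R" and F: "quotient_map X Y F"
    and ker: "\<And>a b. a \<in> topspace X \<Longrightarrow> b \<in> topspace X \<Longrightarrow> F a = F b \<longleftrightarrow> (a, b) \<in> R"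
  shows "homeomorphic_map (quot_topology X R) Y (\<lambda>C. F (SOME a. a \<in> C))"
proof -
  define f where "f = (\<lambda>C. F (SOME a. a \<in> C))"
  have f_cls: "f (cls R a) = F a" if "a \<in> topspace X" for a
  proof -
    have "(a, SOME b. b \<in> cls R a) \<in> R" by (rule some_in_cls[OF R that])
    then show ?thesis
      using ker that R unfolding f_def by (metis equiv_class_eq_iff)
  qed
  have q: "quotient_map X (quot_topology X R) (cls R)" by (rule quotient_map_cls[OF R])
  have Ff: "quotient_map X Y (f \<circ> cls R)"
    using F by (rule quotient_map_eq) (simp add: f_cls)
  have "continuous_map (quot_topology X R) Y f"
    using q by (rule continuous_compose_quotient_map) (rule quotient_imp_continuous_map[OF Ff])
  then have "quotient_map (quot_topology X R) Y f"
    by (rule quotient_map_from_composition[OF quotient_imp_continuous_map[OF q] _ Ff])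
  moreover have "inj_on f (topspace (quot_topology X R))"
  proof (rule inj_onI)
    fix C D assume "C \<in> topspace (quot_topology X R)" "D \<in> topspace (quot_topology X R)"
      and "f C = f D"
    moreover obtain a where "a \<in> topspace X" "C = cls R a"
      using \<open>C \<in> _\<close> unfolding topspace_quot_topology[OF R] cls_def by (blast elim: quotientE)
    moreover obtain b where "b \<in> topspace X" "D = cls R b"
      using \<open>D \<in> _\<close> unfolding topspace_quot_topology[OF R] cls_def by (blast elim: quotientE)
    ultimately have "(a, b) \<in> R" using ker by (simp add: f_cls)
    then show "C = D" using R \<open>C = cls R a\<close> \<open>D = cls R b\<close> by (simp add: cls_def equiv_class_eq)
  qed
  ultimately show ?thesis by (simp add: homeomorphic_map_def f_def)
qed

lemma quotient_map_sum_topology: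
  assumes "\<And>i. i \<in> I \<Longrightarrow> quotient_map (X i) (Y i) (f i)"
  shows "quotient_map (sum_topology X I) (sum_topology Y I) (\<lambda>(i, x). (i, f i x))"
  unfolding quotient_map_def
proof (intro conjI allI impI)
  show "(\<lambda>(i, x). (i, f i x)) ` topspace (sum_topology X I) = topspace (sum_topology Y I)"
  proof -
    have "f i ` topspace (X i) = topspace (Y i)" if "i \<in> I" for i
      using assms[OF that] by (rule quotient_imp_surjective_map)
    then show ?thesis by (fastforce simp: image_iff)
  qed
  fix U assume U: "U \<subseteq> topspace (sum_topology Y I)"
  let ?V = "{p \<in> topspace (sum_topology X I). (case p of (i, x) \<Rightarrow> (i, f i x)) \<in> U}"
  have "openin (X i) {x. (i, x) \<in> ?V} \<longleftrightarrow> openin (Y i) {y. (i, y) \<in> U}" if "i \<in> I" for i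
  proof -
    have "{y. (i, y) \<in> U} \<subseteq> topspace (Y i)" using U by auto
    then have "openin (X i) {x \<in> topspace (X i). f i x \<in> {y. (i, y) \<in> U}} \<longleftrightarrow> openin (Y i) {y. (i, y) \<in> U}"
      using assms[OF that] unfolding quotient_map_def by blast
    moreover have "{x. (i, x) \<in> ?V} = {x \<in> topspace (X i). f i x \<in> {y. (i, y) \<in> U}}"
      using that by auto
    ultimately show ?thesis by simp
  qed
  then show "openin (sum_topology X I) ?V \<longleftrightarrow> openin (sum_topology Y I) U"
    using U by (auto simp: openin_sum_topology)
qed

section \<open>The James construction\<close>

definition insert_coord :: "nat \<Rightarrow> nat \<Rightarrow> 'a \<Rightarrow> (nat \<Rightarrow> 'a) \<Rightarrow> (nat \<Rightarrow> 'a)" where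
  "insert_coord n j v z = (\<lambda>k\<in>{..<Suc n}. if k < j then z k else if k = j then v else z (k - 1))"

definition delete_coord :: "nat \<Rightarrow> nat \<Rightarrow> (nat \<Rightarrow> 'a) \<Rightarrow> (nat \<Rightarrow> 'a)" where
  "delete_coord n j y = (\<lambda>k\<in>{..<n}. if k < j then y k else y (Suc k))"

lemma insert_coord_PiE:
  "z \<in> PiE {..<n} (\<lambda>_. S) \<Longrightarrow> v \<in> S \<Longrightarrow> j \<le> n \<Longrightarrow> insert_coord n j v z \<in> PiE {..<Suc n} (\<lambda>_. S)"
  by (auto simp: insert_coord_def PiE_iff)

lemma delete_coord_PiE: "y \<in> PiE {..<Suc n} (\<lambda>_. S) \<Longrightarrow> delete_coord n j y \<in> PiE {..<n} (\<lambda>_. S)"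
  by (auto simp: delete_coord_def PiE_iff)

lemma insert_delete_coord:
  "y \<in> extensional {..<Suc n} \<Longrightarrow> j \<le> n \<Longrightarrow> insert_coord n j (y j) (delete_coord n j y) = y"
  by (auto simp: fun_eq_iff insert_coord_def delete_coord_def extensional_def)

lemma insert_coord_last: "z \<in> extensional {..<n} \<Longrightarrow> insert_coord n n v z = z(n := v)"
  by (auto simp: fun_eq_iff insert_coord_def extensional_def)

lemma map_insert_coord:
  assumes "j \<le> n"
  shows "map (insert_coord n j v z) [0..<Suc n] = map z [0..<j] @ v # map z [j..<n]"
proof -
  have "[0..<Suc n] = [0..<j] @ j # map Suc [j..<n]"
  proof -
    have "[0..<Suc n] = [0..<j] @ [j..<Suc n]"
      using assms by (metis le_SucI le_add_diff_inverse upt_add_eq_append zero_le)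
    then show ?thesis using assms by (simp add: upt_conv_Cons map_Suc_upt)
  qed
  then show ?thesis
    using assms by (simp add: insert_coord_def del: upt_Suc)
qed

lemma filter_map_insert_coord:
  assumes "j \<le> n" and "\<not> P v"
  shows "filter P (map (insert_coord n j v z) [0..<Suc n]) = filter P (map z [0..<n])"
proof -
  have "[0..<n] = [0..<j] @ [j..<n]"
    using assms(1) by (metis le_add_diff_inverse upt_add_eq_append zero_le)
  then show ?thesis using assms by (simp add: map_insert_coord del: upt_Suc)
qed

lemma topspace_pow_top: "topspace (pow_top X n) = PiE {..<n} (\<lambda>_. topspace X)"
  by (simp add: pow_top_def)

lemma fun_upd_in_topspace_pow_top:
  "z \<in> topspace (pow_top X n) \<Longrightarrow> v \<in> topspace X \<Longrightarrow> z(n := v) \<in> topspace (pow_top X (Suc n))"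
  using PiE_fun_upd[of v "\<lambda>_. topspace X" n z "{..<n}"] by (simp add: topspace_pow_top lessThan_Suc)

lemma james_relI:
  "y \<in> topspace (pow_top X n) \<Longrightarrow> Suc k < n \<Longrightarrow> y (Suc k) = x0 \<Longrightarrow>
    (y, y(k := x0, Suc k := y k)) \<in> james_rel X x0 n"
  unfolding james_rel_def by blast

abbreviation James_n_equiv :: "'a topology \<Rightarrow> 'a \<Rightarrow> nat \<Rightarrow> ((nat \<Rightarrow> 'a) \<times> (nat \<Rightarrow> 'a)) set" where
  "James_n_equiv X x0 n \<equiv> gen_equiv (topspace (pow_top X n)) (james_rel X x0 n)"

abbreviation James_equiv ::
  "'a topology \<Rightarrow> 'a \<Rightarrow> ((nat \<times> (nat \<Rightarrow> 'a) set) \<times> (nat \<times> (nat \<Rightarrow> 'a) set)) set" where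
  "James_equiv X x0 \<equiv> gen_equiv (topspace (J_sum X x0)) (J_colim_rel X x0)"

lemma topspace_J_n: "topspace (J_n X x0 n) = topspace (pow_top X n) // James_n_equiv X x0 n"
  unfolding J_n_def by (rule topspace_quot_topology[OF equiv_gen_equiv])

lemma topspace_J_sum: "topspace (J_sum X x0) = Sigma UNIV (\<lambda>n. topspace (J_n X x0 n))"
  by (auto simp: J_sum_def)

lemma cls_in_topspace_J_sum:
  "y \<in> topspace (pow_top X n) \<Longrightarrow> (n, cls (James_n_equiv X x0 n) y) \<in> topspace (J_sum X x0)"
  by (simp add: topspace_J_sum topspace_J_n cls_in_quotient)

lemma james_rel_subset:
  assumes "x0 \<in> topspace X"
  shows "james_rel X x0 n \<subseteq> topspace (pow_top X n) \<times> topspace (pow_top X n)"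
proof (rule subrelI)
  fix a b assume "(a, b) \<in> james_rel X x0 n"
  then obtain k where "a \<in> topspace (pow_top X n)" "Suc k < n" "b = a(k := x0, Suc k := a k)"
    unfolding james_rel_def by blast
  then show "(a, b) \<in> topspace (pow_top X n) \<times> topspace (pow_top X n)"
    using assms by (auto simp: topspace_pow_top PiE_iff extensional_def)
qed

lemma james_rel_insert_coord:
  assumes "x0 \<in> topspace X" and "z \<in> topspace (pow_top X n)" and "j < n"
  shows "(insert_coord n (Suc j) x0 z, insert_coord n j x0 z) \<in> james_rel X x0 (Suc n)"
proof -
  let ?y = "insert_coord n (Suc j) x0 z"
  have "?y \<in> topspace (pow_top X (Suc n))"
    using assms by (simp add: topspace_pow_top insert_coord_PiE)
  moreover have "insert_coord n j x0 z = ?y(j := x0, Suc j := ?y j)"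
    using assms(3) by (auto simp: fun_eq_iff insert_coord_def)
  moreover have "?y (Suc j) = x0" using assms(3) by (simp add: insert_coord_def)
  ultimately show ?thesis using james_relI assms(3) by (metis Suc_mono)
qed

lemma James_n_equiv_insert_coord:
  assumes x0: "x0 \<in> topspace X" and z: "z \<in> topspace (pow_top X n)" and "j \<le> n"
  shows "(insert_coord n j x0 z, z(n := x0)) \<in> James_n_equiv X x0 (Suc n)"
  using \<open>j \<le> n\<close>
proof (induction j rule: inc_induct)
  case base
  have "insert_coord n n x0 z \<in> topspace (pow_top X (Suc n))"
    using x0 z by (simp add: topspace_pow_top insert_coord_PiE)
  moreover have "insert_coord n n x0 z = z(n := x0)"
    using z by (simp add: insert_coord_last topspace_pow_top PiE_iff)
  ultimately show ?case by (metis gen_equiv_refl)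
next
  case (step j)
  have "(insert_coord n (Suc j) x0 z, insert_coord n j x0 z) \<in> James_n_equiv X x0 (Suc n)"
    using james_rel_insert_coord[OF x0 z step(2)] james_rel_subset[OF x0] by (blast intro: gen_equivI)
  then show ?case using step(3) by (blast intro: gen_equiv_sym gen_equiv_trans)
qed

lemma James_n_equiv_append:
  assumes x0: "x0 \<in> topspace X" and "(y, y') \<in> James_n_equiv X x0 n"
  shows "(y(n := x0), y'(n := x0)) \<in> James_n_equiv X x0 (Suc n)"
proof (rule gen_equiv_image[OF james_rel_subset[OF x0] _ _ assms(2)])
  show "(\<lambda>y. y(n := x0)) ` topspace (pow_top X n) \<subseteq> topspace (pow_top X (Suc n))"
    using x0 by (blast intro: fun_upd_in_topspace_pow_top)
  fix a b assume "(a, b) \<in> james_rel X x0 n"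
  then obtain k where k: "a \<in> topspace (pow_top X n)" "Suc k < n" "a (Suc k) = x0"
    "b = a(k := x0, Suc k := a k)"
    unfolding james_rel_def by blast
  have "b(n := x0) = (a(n := x0))(k := x0, Suc k := (a(n := x0)) k)"
    using k by (simp add: fun_eq_iff)
  then show "(a(n := x0), b(n := x0)) \<in> james_rel X x0 (Suc n)"
    using james_relI[OF fun_upd_in_topspace_pow_top[OF k(1) x0], of k] k by simp
qed

lemma J_incl_cls:
  assumes x0: "x0 \<in> topspace X" and z: "z \<in> topspace (pow_top X n)"
  shows "J_incl X x0 n (cls (James_n_equiv X x0 n) z) = cls (James_n_equiv X x0 (Suc n)) (z(n := x0))"
proof -
  have "(z, SOME y. y \<in> cls (James_n_equiv X x0 n) z) \<in> James_n_equiv X x0 n"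
    by (rule some_in_cls[OF equiv_gen_equiv z])
  then show ?thesis
    unfolding J_incl_def by (metis James_n_equiv_append[OF x0] cls_eqI)
qed

lemma James_pt_append:
  assumes x0: "x0 \<in> topspace X" and z: "z \<in> topspace (pow_top X n)"
  shows "James_pt X x0 (Suc n) (z(n := x0)) = James_pt X x0 n z"
proof -
  have "z(n := x0) \<in> topspace (pow_top X (Suc n))"
    using x0 z by (simp add: fun_upd_in_topspace_pow_top)
  moreover have "((n, cls (James_n_equiv X x0 n) z), (Suc n, J_incl X x0 n (cls (James_n_equiv X x0 n) z)))
      \<in> J_colim_rel X x0"
    using z unfolding J_colim_rel_def by (auto simp: topspace_J_n cls_in_quotient)
  ultimately have "((n, cls (James_n_equiv X x0 n) z), (Suc n, cls (James_n_equiv X x0 (Suc n)) (z(n := x0))))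
      \<in> James_equiv X x0"
    using z by (intro gen_equivI) (auto simp: J_incl_cls[OF x0 z] cls_in_topspace_J_sum)
  then show ?thesis unfolding James_pt_def by (metis cls_eqI)
qed

lemma James_pt_insert_basepoint:
  assumes x0: "x0 \<in> topspace X" and z: "z \<in> topspace (pow_top X n)" and "j \<le> n"
  shows "James_pt X x0 (Suc n) (insert_coord n j x0 z) = James_pt X x0 n z"
  using cls_eqI[OF James_n_equiv_insert_coord[OF assms]] James_pt_append[OF x0 z]
  by (simp add: James_pt_def)

definition reduced_word :: "'a \<Rightarrow> nat \<Rightarrow> (nat \<Rightarrow> 'a) \<Rightarrow> 'a list" where
  "reduced_word x0 n y = filter (\<lambda>w. w \<noteq> x0) (map y [0..<n])"

lemma reduced_word_insert_basepoint:
  "j \<le> n \<Longrightarrow> reduced_word x0 (Suc n) (insert_coord n j x0 z) = reduced_word x0 n z"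
  unfolding reduced_word_def by (rule filter_map_insert_coord) simp_all

lemma reduced_word_james_rel:
  assumes "(a, b) \<in> james_rel X x0 n"
  shows "reduced_word x0 n a = reduced_word x0 n b"
proof -
  obtain k where k: "a \<in> topspace (pow_top X n)" "Suc k < n" "a (Suc k) = x0" "b = a(k := x0, Suc k := a k)"
    using assms unfolding james_rel_def by blast
  then obtain m where n: "n = Suc m" by (cases n) auto
  have ext: "a \<in> extensional {..<Suc m}" using k(1) n by (simp add: topspace_pow_top PiE_iff)
  obtain d where "a = insert_coord m (Suc k) x0 d" "b = insert_coord m k x0 d"
  proof
    show "a = insert_coord m (Suc k) x0 (delete_coord m (Suc k) a)"
      using insert_delete_coord[OF ext, of "Suc k"] k n by simp
    show "b = insert_coord m k x0 (delete_coord m (Suc k) a)"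
      using ext k n by (auto simp: fun_eq_iff insert_coord_def delete_coord_def extensional_def)
  qed
  then show ?thesis
    using k(2) n by (simp add: reduced_word_insert_basepoint)
qed

lemma James_pt_eq_imp_reduced_word_eq:
  assumes x0: "x0 \<in> topspace X"
    and y: "y \<in> topspace (pow_top X n)" and y': "y' \<in> topspace (pow_top X m)"
    and eq: "James_pt X x0 n y = James_pt X x0 m y'"
  shows "reduced_word x0 n y = reduced_word x0 m y'"
proof -
  define W where "W p = reduced_word x0 (fst p) (SOME y. y \<in> snd p)" for p :: "nat \<times> (nat \<Rightarrow> 'a) set"
  have W_cls: "W (k, cls (James_n_equiv X x0 k) z) = reduced_word x0 k z"
    if "z \<in> topspace (pow_top X k)" for k z
    using gen_equiv_respects[where f="reduced_word x0 k",
        OF reduced_word_james_rel some_in_cls[OF equiv_gen_equiv that]]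
    by (simp add: W_def)
  have "W p = W q" if pq: "(p, q) \<in> J_colim_rel X x0" for p q
  proof -
    obtain k C where pq: "p = (k, C)" "q = (Suc k, J_incl X x0 k C)" "C \<in> topspace (J_n X x0 k)"
      using pq unfolding J_colim_rel_def by blast
    then obtain z where z: "z \<in> topspace (pow_top X k)" "C = cls (James_n_equiv X x0 k) z"
      by (auto simp: topspace_J_n cls_def elim: quotientE)
    have "z(k := x0) \<in> topspace (pow_top X (Suc k))"
      using x0 z by (simp add: fun_upd_in_topspace_pow_top)
    moreover have "z(k := x0) = insert_coord k k x0 z"
      using z by (simp add: insert_coord_last topspace_pow_top PiE_iff)
    ultimately show ?thesis
      using pq z by (simp add: W_cls J_incl_cls[OF x0] reduced_word_insert_basepoint)
  qed
  moreover have "((n, cls (James_n_equiv X x0 n) y), (m, cls (James_n_equiv X x0 m) y')) \<in> James_equiv X x0"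
    using eq cls_eq_iff[OF cls_in_topspace_J_sum[OF y] cls_in_topspace_J_sum[OF y']]
    by (simp add: James_pt_def)
  ultimately have "W (n, cls (James_n_equiv X x0 n) y) = W (m, cls (James_n_equiv X x0 m) y')"
    by (rule gen_equiv_respects)
  then show ?thesis using y y' by (simp add: W_cls)
qed

section \<open>The exponential map onto the circle\<close>

definition e2pi :: "real \<Rightarrow> complex" where
  "e2pi t = exp (2 * pi * \<i> * complex_of_real t)"

lemma norm_e2pi [simp]: "norm (e2pi t) = 1"
  by (simp add: e2pi_def norm_exp_eq_Re)

lemma e2pi_eq_1_iff:
  assumes "0 \<le> t" "t \<le> 1"
  shows "e2pi t = 1 \<longleftrightarrow> t = 0 \<or> t = 1"
proof
  assume "e2pi t = 1"
  then obtain m :: int where "2 * pi * t = of_int (2 * m) * pi" by (auto simp: e2pi_def exp_eq_1)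
  then have t: "t = of_int m" by (simp add: field_simps)
  with assms have "0 \<le> m" "m \<le> 1" by simp_all
  then have "m = 0 \<or> m = 1" by linarith
  with t show "t = 0 \<or> t = 1" by auto
qed (auto simp: e2pi_def exp_eq_1)

lemma inj_on_e2pi: "inj_on e2pi {0<..<1}"
proof (rule inj_onI)
  fix s t :: real assume "s \<in> {0<..<1}" "t \<in> {0<..<1}" "e2pi s = e2pi t"
  then obtain m :: int where "2 * pi * \<i> * s = 2 * pi * \<i> * t + (of_int (2 * m) * pi) * \<i>"
    by (auto simp: e2pi_def exp_eq)
  then have "Im (2 * pi * \<i> * s) = Im (2 * pi * \<i> * t + (of_int (2 * m) * pi) * \<i>)"
    by simp
  then have "pi * (2 * s) = pi * (2 * t + 2 * m)" by (simp add: algebra_simps)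
  then have "s = t + m" by simp
  with \<open>s \<in> {0<..<1}\<close> \<open>t \<in> {0<..<1}\<close> show "s = t" by auto
qed

lemma e2pi_Arg2pi: "w \<in> sphere 0 1 \<Longrightarrow> e2pi (Arg2pi w / (2 * pi)) = w"
  using Arg2pi[of w] by (simp add: e2pi_def is_Arg_def field_simps)

lemma topspace_circle [simp]: "topspace circle = sphere 0 1"
  by (simp add: circle_def)

lemma continuous_map_e2pi: "continuous_map (top_of_set {0..1}) circle e2pi"
  unfolding circle_def
  by (auto simp: continuous_map_in_subtopology continuous_map_iff_continuous e2pi_def
      intro!: continuous_intros)

definition e2pi_tuple :: "nat \<Rightarrow> (nat \<Rightarrow> real) \<Rightarrow> nat \<Rightarrow> complex" where
  "e2pi_tuple n x = (\<lambda>k\<in>{..<n}. e2pi (x k))"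

lemma topspace_cube_top: "topspace (cube_top n) = PiE {..<n} (\<lambda>_. {0..1})"
  by (simp add: cube_top_def)

lemma e2pi_tuple_in_topspace: "e2pi_tuple n x \<in> topspace (pow_top circle n)"
  by (simp add: e2pi_tuple_def topspace_pow_top circle_def)

lemma e2pi_tuple_insert_coord:
  "j \<le> m \<Longrightarrow> e2pi_tuple (Suc m) (insert_coord m j v x) = insert_coord m j (e2pi v) (e2pi_tuple m x)"
  by (auto simp: fun_eq_iff e2pi_tuple_def insert_coord_def)

lemma continuous_map_e2pi_tuple: "continuous_map (cube_top n) (pow_top circle n) (e2pi_tuple n)"
  unfolding pow_top_def continuous_map_componentwise
proof (intro conjI ballI)
  show "e2pi_tuple n ` topspace (cube_top n) \<subseteq> extensional {..<n}"
    by (auto simp: e2pi_tuple_def)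
  fix k assume k: "k \<in> {..<n}"
  have "continuous_map (cube_top n) circle (e2pi \<circ> (\<lambda>x. x k))"
    using k unfolding cube_top_def
    by (intro continuous_map_compose[OF _ continuous_map_e2pi] continuous_map_product_projection)
  then show "continuous_map (cube_top n) circle (\<lambda>x. e2pi_tuple n x k)"
    by (rule continuous_map_eq) (use k in \<open>simp add: e2pi_tuple_def\<close>)
qed

lemma e2pi_tuple_surjective: "e2pi_tuple n ` topspace (cube_top n) = topspace (pow_top circle n)"
proof
  show "e2pi_tuple n ` topspace (cube_top n) \<subseteq> topspace (pow_top circle n)"
    using e2pi_tuple_in_topspace by auto
  show "topspace (pow_top circle n) \<subseteq> e2pi_tuple n ` topspace (cube_top n)"
  proof
    fix z assume z: "z \<in> topspace (pow_top circle n)"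
    let ?x = "\<lambda>k\<in>{..<n}. Arg2pi (z k) / (2 * pi)"
    have x: "?x \<in> topspace (cube_top n)"
      using Arg2pi_ge_0 Arg2pi_lt_2pi by (auto simp: topspace_cube_top less_imp_le)
    have "e2pi_tuple n ?x = z"
      using z by (auto simp: fun_eq_iff e2pi_tuple_def topspace_pow_top circle_def PiE_iff
          extensional_def e2pi_Arg2pi)
    then show "z \<in> e2pi_tuple n ` topspace (cube_top n)" by (rule image_eqI[OF sym x])
  qed
qed

lemma quotient_map_e2pi_tuple: "quotient_map (cube_top n) (pow_top circle n) (e2pi_tuple n)"
proof (rule continuous_closed_imp_quotient_map[OF continuous_map_e2pi_tuple _ e2pi_tuple_surjective])
  have "compact_space (cube_top n)"
    unfolding cube_top_def compact_space_product_topology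
    by (auto intro!: compact_space_subtopology simp: compactin_subtopology)
  moreover have "Hausdorff_space (pow_top circle n)"
    unfolding pow_top_def Hausdorff_space_product_topology circle_def
    by (auto intro: Hausdorff_space_subtopology Hausdorff_space_euclidean)
  ultimately show "closed_map (cube_top n) (pow_top circle n) (e2pi_tuple n)"
    using continuous_map_e2pi_tuple by (intro continuous_imp_closed_map)
qed

section \<open>The realization of Z\<close>

abbreviation Z_equiv ::
  "((nat \<times> (unit \<times> (nat \<Rightarrow> real))) \<times> (nat \<times> (unit \<times> (nat \<Rightarrow> real)))) set" where
  "Z_equiv \<equiv> gen_equiv (topspace (cubes_sum Z_cubes)) (realization_rel Z_cubes Z_face)"

lemma topspace_cubes_sum: "topspace (cubes_sum K) = Sigma UNIV (\<lambda>n. K n \<times> topspace (cube_top n))"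
  by (auto simp: cubes_sum_def)

lemma coface_eq_insert_coord: "coface (Suc m) i e x = insert_coord m (i - 1) e x"
  by (auto simp: coface_def insert_coord_def fun_eq_iff)

lemma realization_rel_ZI:
  assumes "x \<in> topspace (cube_top m)" and "j \<le> m" and "v = 0 \<or> v = 1"
  shows "((m, ((), x)), (Suc m, ((), insert_coord m j v x))) \<in> realization_rel Z_cubes Z_face"
proof -
  have "insert_coord m j v x = coface (Suc m) (Suc j) (if v = 1 then 1 else 0) x"
    using assms(3) by (auto simp: coface_eq_insert_coord)
  then show ?thesis
    unfolding realization_rel_def Z_cubes_def Z_face_def using assms(1,2)
    by (intro CollectI exI[of _ m] exI[of _ "Suc j"] exI[of _ "v = 1"]) auto
qed

lemma realization_rel_ZE:
  assumes "(a, b) \<in> realization_rel Z_cubes Z_face"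
  obtains m j v x where "a = (m, ((), x))" "b = (Suc m, ((), insert_coord m j v x))"
    "x \<in> topspace (cube_top m)" "j \<le> m" "v = 0 \<or> v = 1"
proof -
  obtain m i e c x where "a = (m, (Z_face (Suc m) i e c, x))"
    "b = (Suc m, (c, coface (Suc m) i (if e then 1 else 0) x))"
    "1 \<le> i" "i \<le> Suc m" "x \<in> topspace (cube_top m)"
    using assms unfolding realization_rel_def by blast
  then show ?thesis
    using that[of m x "i - 1" "if e then 1 else 0"] by (simp add: Z_face_def coface_eq_insert_coord)
qed

definition interior_coords :: "nat \<Rightarrow> (nat \<Rightarrow> real) \<Rightarrow> real list" where
  "interior_coords n x = filter (\<lambda>t. t \<noteq> 0 \<and> t \<noteq> 1) (map x [0..<n])"

definition word_cube :: "real list \<Rightarrow> nat \<times> (unit \<times> (nat \<Rightarrow> real))" where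
  "word_cube w = (length w, ((), \<lambda>k\<in>{..<length w}. w ! k))"

lemma word_cube_interior_coords:
  assumes "x \<in> topspace (cube_top n)" and "\<forall>k<n. x k \<noteq> 0 \<and> x k \<noteq> 1"
  shows "word_cube (interior_coords n x) = (n, ((), x))"
proof -
  have "interior_coords n x = map x [0..<n]"
    unfolding interior_coords_def using assms(2) by (intro filter_True) auto
  moreover have "(\<lambda>k\<in>{..<n}. map x [0..<n] ! k) = x"
    using assms(1) by (auto simp: fun_eq_iff topspace_cube_top PiE_iff extensional_def)
  ultimately show ?thesis by (simp add: word_cube_def)
qed

lemma interior_coords_insert_vertex:
  "j \<le> m \<Longrightarrow> v = 0 \<or> v = 1 \<Longrightarrow> interior_coords (Suc m) (insert_coord m j v x) = interior_coords m x"
  unfolding interior_coords_def by (rule filter_map_insert_coord) auto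

lemma Z_equiv_word_cube:
  "x \<in> topspace (cube_top n) \<Longrightarrow> ((n, ((), x)), word_cube (interior_coords n x)) \<in> Z_equiv"
proof (induction n arbitrary: x)
  case 0
  then show ?case
    by (simp add: word_cube_interior_coords gen_equiv_refl topspace_cubes_sum Z_cubes_def)
next
  case (Suc m)
  show ?case
  proof (cases "\<forall>k<Suc m. x k \<noteq> 0 \<and> x k \<noteq> 1")
    case True
    then show ?thesis
      using Suc.prems by (simp add: word_cube_interior_coords gen_equiv_refl topspace_cubes_sum Z_cubes_def)
  next
    case False
    then obtain j where j: "j \<le> m" "x j = 0 \<or> x j = 1" by (auto simp: less_Suc_eq_le)
    let ?d = "delete_coord m j x"
    have d: "?d \<in> topspace (cube_top m)"
      using Suc.prems by (simp add: topspace_cube_top delete_coord_PiE)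
    have x: "x = insert_coord m j (x j) ?d"
      using Suc.prems j(1) by (simp add: insert_delete_coord topspace_cube_top PiE_iff)
    have "((m, ((), ?d)), (Suc m, ((), x))) \<in> Z_equiv"
      using realization_rel_ZI[OF d j] Suc.prems d
      by (intro gen_equivI) (simp_all add: topspace_cubes_sum Z_cubes_def flip: x)
    moreover have "interior_coords (Suc m) x = interior_coords m ?d"
      using interior_coords_insert_vertex[OF j] x by metis
    ultimately show ?thesis
      using Suc.IH[OF d] by (metis gen_equiv_sym gen_equiv_trans)
  qed
qed

lemma reduced_word_e2pi_tuple:
  assumes "x \<in> topspace (cube_top n)"
  shows "reduced_word 1 n (e2pi_tuple n x) = map e2pi (interior_coords n x)"
proof -
  have "map (e2pi_tuple n x) [0..<n] = map e2pi (map x [0..<n])"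
    by (simp add: e2pi_tuple_def)
  then have "reduced_word 1 n (e2pi_tuple n x) = map e2pi (filter ((\<lambda>w. w \<noteq> 1) \<circ> e2pi) (map x [0..<n]))"
    unfolding reduced_word_def by (simp only: filter_map)
  also have "filter ((\<lambda>w. w \<noteq> 1) \<circ> e2pi) (map x [0..<n]) = interior_coords n x"
    unfolding interior_coords_def
  proof (rule filter_cong[OF refl])
    fix t assume "t \<in> set (map x [0..<n])"
    then have "0 \<le> t" "t \<le> 1" using assms by (auto simp: topspace_cube_top PiE_iff)
    then show "((\<lambda>w. w \<noteq> 1) \<circ> e2pi) t \<longleftrightarrow> t \<noteq> 0 \<and> t \<noteq> 1" by (simp add: e2pi_eq_1_iff)
  qed
  finally show ?thesis .
qed

definition Z_to_James :: "nat \<times> (unit \<times> (nat \<Rightarrow> real)) \<Rightarrow> (nat \<times> (nat \<Rightarrow> complex) set) set" where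
  "Z_to_James = (\<lambda>(n, (c, x)). James_pt circle 1 n (e2pi_tuple n x))"

lemma Z_to_James_realization_rel:
  assumes "(a, b) \<in> realization_rel Z_cubes Z_face"
  shows "Z_to_James a = Z_to_James b"
proof -
  obtain m j v x where ab: "a = (m, ((), x))" "b = (Suc m, ((), insert_coord m j v x))"
    and x: "x \<in> topspace (cube_top m)" and j: "j \<le> m" and v: "v = 0 \<or> v = 1"
    using assms by (rule realization_rel_ZE)
  have "e2pi v = 1" using v by (auto simp: e2pi_def)
  then show ?thesis
    using ab j by (simp add: Z_to_James_def e2pi_tuple_insert_coord James_pt_insert_basepoint
        e2pi_tuple_in_topspace)
qed

lemma Z_to_James_eq_iff:
  assumes a: "a \<in> topspace (cubes_sum Z_cubes)" and b: "b \<in> topspace (cubes_sum Z_cubes)"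
  shows "Z_to_James a = Z_to_James b \<longleftrightarrow> (a, b) \<in> Z_equiv"
proof
  assume eq: "Z_to_James a = Z_to_James b"
  obtain n x where an: "a = (n, ((), x))" "x \<in> topspace (cube_top n)"
    using a by (auto simp: topspace_cubes_sum Z_cubes_def)
  obtain m y where bm: "b = (m, ((), y))" "y \<in> topspace (cube_top m)"
    using b by (auto simp: topspace_cubes_sum Z_cubes_def)
  have "reduced_word 1 n (e2pi_tuple n x) = reduced_word 1 m (e2pi_tuple m y)"
    using eq an bm
    by (intro James_pt_eq_imp_reduced_word_eq) (auto simp: Z_to_James_def e2pi_tuple_in_topspace)
  then have "map e2pi (interior_coords n x) = map e2pi (interior_coords m y)"
    using an bm by (simp add: reduced_word_e2pi_tuple)
  moreover have "set (interior_coords n x) \<union> set (interior_coords m y) \<subseteq> {0<..<1}"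
    using an(2) bm(2) by (force simp: interior_coords_def topspace_cube_top PiE_iff)
  ultimately have "interior_coords n x = interior_coords m y"
    using inj_on_e2pi by (meson inj_on_map_eq_map inj_on_subset)
  then show "(a, b) \<in> Z_equiv"
    using Z_equiv_word_cube[OF an(2)] Z_equiv_word_cube[OF bm(2)] an bm
    by (metis gen_equiv_sym gen_equiv_trans)
qed (rule gen_equiv_respects[OF Z_to_James_realization_rel])

lemma quotient_map_Z_to_James: "quotient_map (cubes_sum Z_cubes) (James circle 1) Z_to_James"
proof -
  have "quotient_map (prod_topology (discrete_topology (Z_cubes n)) (cube_top n)) (J_n circle 1 n)
          (cls (James_n_equiv circle 1 n) \<circ> (e2pi_tuple n \<circ> snd))" for n
  proof -
    have "quotient_map (prod_topology (discrete_topology (Z_cubes n)) (cube_top n)) (cube_top n) snd"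
      by (simp add: Z_cubes_def flip: null_topspace_iff_trivial)
    then show ?thesis
      unfolding J_n_def
      by (rule quotient_map_compose[OF quotient_map_compose[OF _ quotient_map_e2pi_tuple]
            quotient_map_cls[OF equiv_gen_equiv]])
  qed
  then have "quotient_map (cubes_sum Z_cubes) (J_sum circle 1)
      (\<lambda>(n, p). (n, (cls (James_n_equiv circle 1 n) \<circ> (e2pi_tuple n \<circ> snd)) p))"
    unfolding cubes_sum_def J_sum_def by (rule quotient_map_sum_topology)
  then have "quotient_map (cubes_sum Z_cubes) (James circle 1)
      (cls (James_equiv circle 1) \<circ> (\<lambda>(n, p). (n, (cls (James_n_equiv circle 1 n) \<circ> (e2pi_tuple n \<circ> snd)) p)))"
    unfolding James_def by (rule quotient_map_compose[OF _ quotient_map_cls[OF equiv_gen_equiv]])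
  then show ?thesis
    by (rule quotient_map_eq) (auto simp: Z_to_James_def James_pt_def)
qed

theorem proposition6p8:
  fixes F :: "nat \<times> (unit \<times> (nat \<Rightarrow> real)) \<Rightarrow> (nat \<times> (nat \<Rightarrow> complex) set) set"
  defines "F \<equiv> \<lambda>(n, (c, x)). James_pt circle 1 n (\<lambda>k\<in>{..<n}. exp (2 * pi * \<i> * complex_of_real (x k)))"
  shows "(\<forall>a b. (a, b) \<in> gen_equiv (topspace (cubes_sum Z_cubes)) (realization_rel Z_cubes Z_face)
                  \<longrightarrow> F a = F b)
       \<and> homeomorphic_map (realization Z_cubes Z_face) (James circle 1) (\<lambda>C. F (SOME a. a \<in> C))"
proof -
  have F: "F = Z_to_James"
    by (simp add: fun_eq_iff F_def Z_to_James_def e2pi_tuple_def e2pi_def)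
  have "\<forall>a b. (a, b) \<in> Z_equiv \<longrightarrow> Z_to_James a = Z_to_James b"
    by (intro allI impI) (rule gen_equiv_respects[OF Z_to_James_realization_rel])
  moreover have "homeomorphic_map (realization Z_cubes Z_face) (James circle 1) (\<lambda>C. Z_to_James (SOME a. a \<in> C))"
    unfolding realization_def
    by (rule homeomorphic_map_quot_topology[OF equiv_gen_equiv quotient_map_Z_to_James Z_to_James_eq_iff])
  ultimately show ?thesis unfolding F by (rule conjI)
qed

end
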